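(* For each $n\in\mathbf{N}$, let $\mathcal{X}_n=\{1,\dots,n\}$, fix a chair preference $\succ$ (a ranking) on $\mathcal{X}_n$, and let $R^n$ (respectively $\mathrel{W}^n$) be a uniform random draw from the set of all rankings (respectively tournaments) on $\mathcal{X}_n$, with $R^n$ and $\mathrel{W}^n$ independent. Then $$\Pr\left(R^n \text{ is } \mathrel{W}^n\text{-unimprovable}\ \middle|\ R^n \text{ is } \mathrel{W}^n\text{-feasible}\right)\to 0\quad\text{as } n\to\infty.$$
   Context: A proto-ranking is an irreflexive transitive relation; a ranking is a total proto-ranking; a tournament is a total asymmetric relation on $\mathcal{X}_n$. Interaction: given a tournament $\mathrel{W}$, start from $R_0=\varnothing$; in each period with $R_{t-1}$ not total the chair offers a pair $\{x,y\}$ unranked by $R_{t-1}$, the winner is $x$ if $x\mathrel{W}y$ and $y$ otherwise, and $R_t$ is the transitive closure of $R_{t-1}\cup\{(\text{winner},\text{loser})\}$; stop when $R_t$ is total. A strategy assigns to each non-terminal history a pair unranked at it; its outcome under $\mathrel{W}$ is the final ranking. A ranking is $\mathrel{W}$-feasible if it is the outcome under $\mathrel{W}$ of some strategy. $R$ is more aligned with $\succ$ than $R'$ if for all $x\succ y$, $xR'y$ implies $xRy$; a ranking is $\mathrel{W}$-unimprovable if no other $\mathrel{W}$-feasible ranking is more aligned with $\succ$. *)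

theory Defs
  imports Complex_Main
begin

definition alts :: "nat \<Rightarrow> nat set" where
  "alts n = {1..n}"

definition total_rel :: "nat set \<Rightarrow> nat rel \<Rightarrow> bool" where
  "total_rel X R \<longleftrightarrow> (\<forall>x\<in>X. \<forall>y\<in>X. x \<noteq> y \<longrightarrow> (x, y) \<in> R \<or> (y, x) \<in> R)"

definition is_ranking :: "nat \<Rightarrow> nat rel \<Rightarrow> bool" where
  "is_ranking n R \<longleftrightarrow> R \<subseteq> alts n \<times> alts n \<and> irrefl R \<and> trans R \<and> total_rel (alts n) R"

definition is_tournament :: "nat \<Rightarrow> nat rel \<Rightarrow> bool" where
  "is_tournament n W \<longleftrightarrow> W \<subseteq> alts n \<times> alts n \<and> total_rel (alts n) W \<and>
     (\<forall>x y. (x, y) \<in> W \<longrightarrow> (y, x) \<notin> W)"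

text \<open>A history is the list of (winner, loser) outcomes so far; its induced proto-ranking is
  the transitive closure of these outcomes (starting from the empty relation).\<close>

definition hist_rel :: "(nat \<times> nat) list \<Rightarrow> nat rel" where
  "hist_rel h = (set h)\<^sup>+"

definition unranked :: "nat \<Rightarrow> nat rel \<Rightarrow> nat \<times> nat \<Rightarrow> bool" where
  "unranked n R p \<longleftrightarrow> fst p \<in> alts n \<and> snd p \<in> alts n \<and> fst p \<noteq> snd p \<and>
     p \<notin> R \<and> (snd p, fst p) \<notin> R"

definition is_strategy :: "nat \<Rightarrow> ((nat \<times> nat) list \<Rightarrow> nat \<times> nat) \<Rightarrow> bool" where
  "is_strategy n \<sigma> \<longleftrightarrow> (\<forall>h. set h \<subseteq> alts n \<times> alts n \<and> \<not> total_rel (alts n) (hist_rel h)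
       \<longrightarrow> unranked n (hist_rel h) (\<sigma> h))"

definition winner_loser :: "nat rel \<Rightarrow> nat \<times> nat \<Rightarrow> nat \<times> nat" where
  "winner_loser W p = (if p \<in> W then p else (snd p, fst p))"

primrec play :: "nat \<Rightarrow> ((nat \<times> nat) list \<Rightarrow> nat \<times> nat) \<Rightarrow> nat rel \<Rightarrow> nat \<Rightarrow> (nat \<times> nat) list" where
  "play n \<sigma> W 0 = []"
| "play n \<sigma> W (Suc t) =
     (if total_rel (alts n) (hist_rel (play n \<sigma> W t)) then play n \<sigma> W t
      else play n \<sigma> W t @ [winner_loser W (\<sigma> (play n \<sigma> W t))])"

definition is_outcome :: "nat \<Rightarrow> ((nat \<times> nat) list \<Rightarrow> nat \<times> nat) \<Rightarrow> nat rel \<Rightarrow> nat rel \<Rightarrow> bool" where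
  "is_outcome n \<sigma> W R \<longleftrightarrow> (\<exists>t. total_rel (alts n) (hist_rel (play n \<sigma> W t)) \<and>
       hist_rel (play n \<sigma> W t) = R)"

definition feasible :: "nat \<Rightarrow> nat rel \<Rightarrow> nat rel \<Rightarrow> bool" where
  "feasible n W R \<longleftrightarrow> is_ranking n R \<and> (\<exists>\<sigma>. is_strategy n \<sigma> \<and> is_outcome n \<sigma> W R)"

definition more_aligned :: "nat rel \<Rightarrow> nat rel \<Rightarrow> nat rel \<Rightarrow> bool" where
  "more_aligned P R R' \<longleftrightarrow> (\<forall>x y. (x, y) \<in> P \<longrightarrow> (x, y) \<in> R' \<longrightarrow> (x, y) \<in> R)"

definition unimprovable :: "nat \<Rightarrow> nat rel \<Rightarrow> nat rel \<Rightarrow> nat rel \<Rightarrow> bool" where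
  "unimprovable n P W R \<longleftrightarrow> is_ranking n R \<and>
     \<not> (\<exists>R'. feasible n W R' \<and> R' \<noteq> R \<and> more_aligned P R' R)"

end

theory Submission
  imports Defs
begin

(* A ranking is written as the list of alternatives from top to bottom. It is W-feasible iff
   consecutive alternatives are W-ordered, i.e. iff the list is a Hamiltonian path of W: the
   outcome is the transitive closure of the asked pairs, so a consecutive pair must have been
   asked itself; conversely, asking unranked consecutive pairs produces exactly the ranking.

   Cut the list into n div 5 disjoint blocks of five. In a block [x0, x1, x2, x3, x4] where the
   chair prefers x3 to x1 and x2, and x0 W x3, x3 W x1, x2 W x4, the rearrangement
   [x0, x3, x1, x2, x4] is again a Hamiltonian path and more aligned with the chair, so the
   ranking is not unimprovable. Making one block of a path without such a block switchable
   (reordering it, then reorienting the pairs of W inside it) is at most 3 * 2^14-to-one,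
   because the modified block is the only switchable block of the image. Doing this for each
   of the n div 5 blocks shows that unimprovable feasible pairs form at most a fraction
   3 * 2^14 / (n div 5) of all feasible pairs. *)

section \<open>Rankings as lists\<close>

fun ranking_of :: "'a list \<Rightarrow> 'a rel" where
  "ranking_of [] = {}"
| "ranking_of (x # xs) = {x} \<times> set xs \<union> ranking_of xs"

lemma ranking_of_append: "ranking_of (xs @ ys) = ranking_of xs \<union> set xs \<times> set ys \<union> ranking_of ys"
  by (induction xs) auto

lemma ranking_of_subset: "ranking_of xs \<subseteq> set xs \<times> set xs"
  by (induction xs) auto

lemma irrefl_ranking_of: "distinct xs \<Longrightarrow> irrefl (ranking_of xs)"
  by (induction xs) (auto simp: irrefl_def dest: ranking_of_subset[THEN subsetD])

lemma trans_ranking_of: "distinct xs \<Longrightarrow> trans (ranking_of xs)"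
  by (induction xs) (auto simp: trans_def dest: ranking_of_subset[THEN subsetD])

lemma ranking_of_asym: "distinct xs \<Longrightarrow> (x, y) \<in> ranking_of xs \<Longrightarrow> (y, x) \<notin> ranking_of xs"
  using irrefl_ranking_of trans_ranking_of unfolding irrefl_def trans_def by blast

lemma total_ranking_of: "total_rel (set xs) (ranking_of xs)"
  by (induction xs) (auto simp: total_rel_def)

lemma is_ranking_ranking_of:
  assumes "distinct xs" "set xs = alts n"
  shows "is_ranking n (ranking_of xs)"
  using assms ranking_of_subset irrefl_ranking_of trans_ranking_of total_ranking_of
  unfolding is_ranking_def by metis

lemma ranking_of_Cons_restrict:
  "x \<notin> set xs \<Longrightarrow> ranking_of (x # xs) \<inter> set xs \<times> set xs = ranking_of xs"
  using ranking_of_subset[of xs] by auto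

lemma ranking_of_inject:
  assumes "distinct xs" "distinct ys" "set xs = set ys" "ranking_of xs = ranking_of ys"
  shows "xs = ys"
  using assms
proof (induction xs arbitrary: ys)
  case (Cons x xs)
  obtain y ys' where ys: "ys = y # ys'"
    using Cons.prems(3) by (cases ys) auto
  have "x = y"
  proof (rule ccontr)
    assume "x \<noteq> y"
    then have "(x, y) \<in> ranking_of (x # xs)" "(y, x) \<in> ranking_of ys"
      using Cons.prems(3) ys by auto
    then show False
      using ranking_of_asym[OF Cons.prems(2)] Cons.prems(4) by auto
  qed
  then have "set xs = set ys'"
    using Cons.prems(1-3) ys by auto
  have "ranking_of xs = ranking_of ys'"
  proof -
    have "ranking_of xs = ranking_of (x # xs) \<inter> set xs \<times> set xs"
      using Cons.prems(1) ranking_of_Cons_restrict[of x xs] by simp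
    also have "\<dots> = ranking_of (y # ys') \<inter> set ys' \<times> set ys'"
      using Cons.prems(4) ys \<open>set xs = set ys'\<close> by simp
    also have "\<dots> = ranking_of ys'"
      using Cons.prems(2) ys ranking_of_Cons_restrict[of y ys'] by simp
    finally show ?thesis .
  qed
  then show ?case
    using Cons.IH[of ys'] Cons.prems(1,2) \<open>set xs = set ys'\<close> ys \<open>x = y\<close> by simp
qed simp

lemma ranking_of_exists:
  assumes "finite A" "irrefl R" "trans R" "total_rel A R"
  shows "\<exists>xs. distinct xs \<and> set xs = A \<and> ranking_of xs = R \<inter> A \<times> A"
  using assms(1,4)
proof (induction rule: finite_remove_induct)
  case (remove A)
  have "(Restr R A)\<^sup>+ \<subseteq> R"
    using assms(3) trancl_mono[of _ "Restr R A" R] trancl_id by blast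
  then have "wf (Restr R A)"
    using assms(2) remove.hyps(1) finite_subset[of "Restr R A" "A \<times> A"]
    by (intro finite_acyclic_wf) (auto simp: acyclic_def irrefl_def)
  then obtain x where "x \<in> A" and top: "\<And>y. y \<in> A \<Longrightarrow> (y, x) \<notin> R"
    using remove.hyps(2) wfE_min[of "Restr R A"] by (metis IntI ex_in_conv mem_Sigma_iff)
  moreover have "total_rel (A - {x}) R"
    using remove.prems unfolding total_rel_def by blast
  ultimately obtain xs where
    xs: "distinct xs" "set xs = A - {x}" "ranking_of xs = R \<inter> (A - {x}) \<times> (A - {x})"
    using remove.IH by blast
  have "(x, y) \<in> R" if "y \<in> A - {x}" for y
    using top[of y] that \<open>x \<in> A\<close> remove.prems unfolding total_rel_def by blast
  moreover have "(x, x) \<notin> R"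
    using assms(2) unfolding irrefl_def by blast
  ultimately have "R \<inter> A \<times> A = {x} \<times> (A - {x}) \<union> R \<inter> (A - {x}) \<times> (A - {x})"
    using top \<open>x \<in> A\<close> by auto
  then have "ranking_of (x # xs) = R \<inter> A \<times> A"
    using xs(2,3) by simp
  moreover have "distinct (x # xs)" "set (x # xs) = A"
    using xs(1,2) \<open>x \<in> A\<close> by auto
  ultimately show ?case
    by blast
qed simp

lemma is_ranking_obtain_list:
  assumes "is_ranking n R"
  obtains xs where "distinct xs" "set xs = alts n" "R = ranking_of xs"
proof -
  have "R \<inter> alts n \<times> alts n = R"
    using assms unfolding is_ranking_def by blast
  then show thesis
    using that assms ranking_of_exists[of "alts n" R] unfolding is_ranking_def alts_def by auto
qed

section \<open>Feasible rankings are Hamiltonian paths\<close>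

definition consecutive :: "'a list \<Rightarrow> 'a rel" where
  "consecutive xs = set (zip xs (tl xs))"

lemma successively_iff_consecutive:
  "successively (\<lambda>x y. (x, y) \<in> W) xs \<longleftrightarrow> consecutive xs \<subseteq> W"
  by (induction xs rule: induct_list012) (auto simp: consecutive_def)

lemma consecutive_subset: "consecutive xs \<subseteq> set xs \<times> set xs"
  by (induction xs rule: induct_list012) (auto simp: consecutive_def)

lemma ranking_of_eq_trancl_consecutive:
  "distinct xs \<Longrightarrow> ranking_of xs = (consecutive xs)\<^sup>+"
proof (induction xs rule: induct_list012)
  case (3 x y zs)
  let ?C = "consecutive (y # zs)"
  have "(b, x) \<notin> ?C" for b
    using consecutive_subset[of "y # zs"] "3.prems" by auto
  then have "(a, x) \<in> ?C\<^sup>* \<longleftrightarrow> a = x" for a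
    by (metis rtranclE rtrancl.rtrancl_refl)
  moreover have "(y, b) \<in> ?C\<^sup>* \<longleftrightarrow> b \<in> set (y # zs)" for b
    using "3.IH"(2)[symmetric] "3.prems" ranking_of_subset[of zs]
    by (auto simp: rtrancl_eq_or_trancl)
  moreover have "consecutive (x # y # zs) = insert (x, y) ?C"
    by (simp add: consecutive_def)
  ultimately show ?case
    using "3.IH"(2) "3.prems" by (auto simp: trancl_insert)
qed (auto simp: consecutive_def)

lemma consecutive_no_between:
  "distinct xs \<Longrightarrow> (x, y) \<in> consecutive xs \<Longrightarrow> (x, z) \<in> ranking_of xs \<Longrightarrow> (z, y) \<notin> ranking_of xs"
proof (induction xs rule: induct_list012)
  case (3 a b zs)
  then show ?case
    using consecutive_subset[of "b # zs"] ranking_of_subset[of zs]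
    by (auto simp: consecutive_def)
qed (auto simp: consecutive_def)

lemma set_play_subset:
  assumes "is_tournament n W" "is_strategy n \<sigma>"
  shows "set (play n \<sigma> W t) \<subseteq> W"
proof (induction t)
  case (Suc t)
  let ?h = "play n \<sigma> W t"
  have "winner_loser W (\<sigma> ?h) \<in> W" if "\<not> total_rel (alts n) (hist_rel ?h)"
  proof -
    have "unranked n (hist_rel ?h) (\<sigma> ?h)"
      using assms Suc.IH that unfolding is_strategy_def is_tournament_def by blast
    then show ?thesis
      using assms(1) unfolding unranked_def is_tournament_def total_rel_def winner_loser_def
      by (cases "\<sigma> ?h") auto
  qed
  then show ?case
    using Suc.IH by auto
qed simp

lemma feasible_imp_consecutive_subset:
  assumes "is_tournament n W" "distinct xs" "feasible n W (ranking_of xs)"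
  shows "consecutive xs \<subseteq> W"
proof
  fix p assume p: "p \<in> consecutive xs"
  obtain \<sigma> t where "is_strategy n \<sigma>" and outcome: "(set (play n \<sigma> W t))\<^sup>+ = ranking_of xs"
    using assms(3) unfolding feasible_def is_outcome_def hist_rel_def by blast
  then have S_W: "set (play n \<sigma> W t) \<subseteq> W"
    using assms(1) set_play_subset by blast
  have "p \<in> (set (play n \<sigma> W t))\<^sup>+"
    using p outcome consecutive_subset ranking_of_eq_trancl_consecutive[OF assms(2)] by blast
  then obtain z where "(fst p, z) \<in> set (play n \<sigma> W t)" "(z, snd p) \<in> (set (play n \<sigma> W t))\<^sup>*"
    by (metis prod.collapse tranclD)
  moreover have "(z, snd p) \<notin> (set (play n \<sigma> W t))\<^sup>+"
    using consecutive_no_between[OF assms(2), of "fst p" "snd p" z] p calculation(1) outcome by auto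
  ultimately show "p \<in> W"
    using S_W by (metis prod.collapse rtranclD subsetD)
qed

lemma ranking_eq_if_total_subset:
  assumes "is_ranking n R" "S \<subseteq> R" "total_rel (alts n) S"
  shows "S = R"
proof
  show "R \<subseteq> S"
  proof (rule subrelI)
    fix x y assume "(x, y) \<in> R"
    then have "(y, x) \<notin> S" "x \<noteq> y" "x \<in> alts n" "y \<in> alts n"
      using assms(1,2) unfolding is_ranking_def irrefl_def trans_def by blast+
    then show "(x, y) \<in> S"
      using assms(3) unfolding total_rel_def by blast
  qed
qed (use assms in simp)

lemma unranked_generator_exists:
  assumes "is_ranking n R" "C\<^sup>+ = R" "set h \<subseteq> C" "\<not> total_rel (alts n) (hist_rel h)"
  shows "\<exists>p\<in>C. unranked n (hist_rel h) p"
proof (rule ccontr)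
  assume none: "\<not> ?thesis"
  have hist_R: "hist_rel h \<subseteq> R"
    using assms(2,3) trancl_mono unfolding hist_rel_def by blast
  have "C \<subseteq> hist_rel h"
  proof (rule subrelI)
    fix x y assume "(x, y) \<in> C"
    then have "(x, y) \<in> R"
      using assms(2) by blast
    then have "(y, x) \<notin> hist_rel h" "x \<noteq> y" "x \<in> alts n" "y \<in> alts n"
      using assms(1) hist_R unfolding is_ranking_def irrefl_def trans_def by blast+
    then show "(x, y) \<in> hist_rel h"
      using none \<open>(x, y) \<in> C\<close> unfolding unranked_def by auto
  qed
  then have "R \<subseteq> hist_rel h"
    using assms(2) trancl_mono_subset trancl_id[OF trans_trancl] unfolding hist_rel_def by metis
  then show False
    using assms(1,4) unfolding is_ranking_def total_rel_def by blast
qed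

(* The fallback only serves to make this a strategy on every history. *)
definition strategy_within :: "nat \<Rightarrow> nat rel \<Rightarrow> (nat \<times> nat) list \<Rightarrow> nat \<times> nat" where
  "strategy_within n C h =
     (if \<exists>p\<in>C. unranked n (hist_rel h) p then SOME p. p \<in> C \<and> unranked n (hist_rel h) p
      else SOME p. unranked n (hist_rel h) p)"

lemma strategy_within_in:
  assumes "\<exists>p\<in>C. unranked n (hist_rel h) p"
  shows "strategy_within n C h \<in> C \<and> unranked n (hist_rel h) (strategy_within n C h)"
  using someI_ex[of "\<lambda>p. p \<in> C \<and> unranked n (hist_rel h) p"] assms
  unfolding strategy_within_def by auto

lemma is_strategy_within: "is_strategy n (strategy_within n C)"
  unfolding is_strategy_def
proof (intro allI impI)
  fix h assume "set h \<subseteq> alts n \<times> alts n \<and> \<not> total_rel (alts n) (hist_rel h)"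
  then obtain x y where xy: "unranked n (hist_rel h) (x, y)"
    unfolding total_rel_def unranked_def by auto
  show "unranked n (hist_rel h) (strategy_within n C h)"
  proof (cases "\<exists>p\<in>C. unranked n (hist_rel h) p")
    case False
    then show ?thesis
      using someI[of "unranked n (hist_rel h)", OF xy] unfolding strategy_within_def by simp
  qed (use strategy_within_in in blast)
qed

lemma play_strategy_within:
  assumes "is_ranking n R" "C\<^sup>+ = R" "C \<subseteq> W"
  defines "h t \<equiv> play n (strategy_within n C) W t"
  shows "set (h t) \<subseteq> C \<and> distinct (h t) \<and> (total_rel (alts n) (hist_rel (h t)) \<or> length (h t) = t)"
proof (induction t)
  case (Suc t)
  show ?case
  proof (cases "total_rel (alts n) (hist_rel (h t))")
    case False
    then have p: "strategy_within n C (h t) \<in> C"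
        "unranked n (hist_rel (h t)) (strategy_within n C (h t))"
      using strategy_within_in unranked_generator_exists[OF assms(1,2)] Suc.IH by blast+
    then have "strategy_within n C (h t) \<notin> set (h t)"
      unfolding unranked_def hist_rel_def by (auto dest: r_into_trancl')
    moreover have "winner_loser W (strategy_within n C (h t)) = strategy_within n C (h t)"
      using p(1) assms(3) unfolding winner_loser_def by auto
    ultimately show ?thesis
      using Suc.IH False p(1) unfolding h_def by simp
  qed (use Suc.IH in \<open>simp add: h_def\<close>)
qed (simp add: h_def)

lemma feasible_if_generated_by_winners:
  assumes "is_ranking n R" "C\<^sup>+ = R" "C \<subseteq> W"
  shows "feasible n W R"
proof -
  define h where "h = play n (strategy_within n C) W (Suc (card C))"
  have "C \<subseteq> alts n \<times> alts n"
    using assms(1,2) r_into_trancl' unfolding is_ranking_def by blast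
  then have "finite C"
    unfolding alts_def by (rule finite_subset) simp
  have inv: "set h \<subseteq> C" "distinct h" "total_rel (alts n) (hist_rel h) \<or> length h = Suc (card C)"
    using play_strategy_within[OF assms] unfolding h_def by blast+
  have total: "total_rel (alts n) (hist_rel h)"
    using inv \<open>finite C\<close> by (metis card_mono distinct_card not_less_eq_eq order_refl)
  have "hist_rel h = R"
    using ranking_eq_if_total_subset[OF assms(1) _ total] inv(1) assms(2) trancl_mono_subset
    unfolding hist_rel_def by metis
  then show ?thesis
    using total assms(1) is_strategy_within unfolding feasible_def is_outcome_def h_def by blast
qed

lemma feasible_ranking_of_iff:
  assumes "is_tournament n W" "distinct xs" "set xs = alts n"
  shows "feasible n W (ranking_of xs) \<longleftrightarrow> successively (\<lambda>x y. (x, y) \<in> W) xs"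
  using feasible_imp_consecutive_subset[OF assms(1,2)]
    feasible_if_generated_by_winners[OF is_ranking_ranking_of[OF assms(2,3)]
      ranking_of_eq_trancl_consecutive[OF assms(2), symmetric]]
  unfolding successively_iff_consecutive by blast

section \<open>Switchable blocks\<close>

lemma is_ranking_asym: "is_ranking n P \<Longrightarrow> (x, y) \<in> P \<Longrightarrow> (y, x) \<notin> P"
  unfolding is_ranking_def irrefl_def trans_def by blast

definition switchable :: "nat rel \<Rightarrow> nat rel \<Rightarrow> nat list \<Rightarrow> bool" where
  "switchable P W B \<longleftrightarrow> (\<exists>x0 x1 x2 x3 x4. B = [x0, x1, x2, x3, x4] \<and>
     (x3, x1) \<in> P \<and> (x3, x2) \<in> P \<and> (x0, x3) \<in> W \<and> (x3, x1) \<in> W \<and> (x2, x4) \<in> W)"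

lemma switchable_imp_not_unimprovable:
  assumes P: "is_ranking n P" and W: "is_tournament n W"
    and xs: "distinct xs" "set xs = alts n" "successively (\<lambda>x y. (x, y) \<in> W) xs"
    and split: "xs = as @ B @ bs" and "switchable P W B"
  shows "\<not> unimprovable n P W (ranking_of xs)"
proof -
  obtain x0 x1 x2 x3 x4 where B: "B = [x0, x1, x2, x3, x4]"
    and pref: "(x3, x1) \<in> P" "(x3, x2) \<in> P" and wins: "(x0, x3) \<in> W" "(x3, x1) \<in> W" "(x2, x4) \<in> W"
    using \<open>switchable P W B\<close> unfolding switchable_def by blast
  define ys where "ys = as @ [x0, x3, x1, x2, x4] @ bs"
  have ys: "distinct ys" "set ys = alts n"
    using xs(1,2) unfolding ys_def split B by auto
  have "successively (\<lambda>x y. (x, y) \<in> W) ys"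
    using xs(3) wins unfolding ys_def split B by (simp add: successively_append_iff)
  then have "feasible n W (ranking_of ys)"
    using feasible_ranking_of_iff[OF W ys] by blast
  moreover have "ranking_of ys \<noteq> ranking_of xs"
  proof -
    have "(x1, x3) \<in> ranking_of xs" "(x3, x1) \<in> ranking_of ys"
      unfolding split ys_def B by (simp_all add: ranking_of_append)
    then show ?thesis
      using ranking_of_asym[OF xs(1)] by auto
  qed
  moreover have "more_aligned P (ranking_of ys) (ranking_of xs)"
  proof -
    have "ranking_of B \<subseteq> ranking_of [x0, x3, x1, x2, x4] \<union> {(x1, x3), (x2, x3)}"
      unfolding B by auto
    moreover have "(x1, x3) \<notin> P" "(x2, x3) \<notin> P"
      using pref is_ranking_asym[OF P] by blast+
    ultimately show ?thesis
      unfolding more_aligned_def split ys_def ranking_of_append B by auto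
  qed
  ultimately show ?thesis
    unfolding unimprovable_def by blast
qed

section \<open>Counting\<close>

lemma length_eq_5_conv: "length B = 5 \<longleftrightarrow> (\<exists>x0 x1 x2 x3 x4. B = [x0, x1, x2, x3, x4])"
  by (simp add: numeral_eq_Suc length_Suc_conv) blast

definition block :: "'a list \<Rightarrow> nat \<Rightarrow> 'a list" where
  "block xs k = take 5 (drop (5 * k) xs)"

definition replace_block :: "'a list \<Rightarrow> nat \<Rightarrow> 'a list \<Rightarrow> 'a list" where
  "replace_block xs k B = take (5 * k) xs @ B @ drop (5 * k + 5) xs"

lemma replace_block_block [simp]: "replace_block xs k (block xs k) = xs"
  unfolding replace_block_def block_def
  by (metis add.commute append_take_drop_id drop_drop)

lemma length_block: "5 * k + 5 \<le> length xs \<Longrightarrow> length (block xs k) = 5"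
  unfolding block_def by simp

lemma length_replace_block:
  "length B = 5 \<Longrightarrow> 5 * k + 5 \<le> length xs \<Longrightarrow> length (replace_block xs k B) = length xs"
  unfolding replace_block_def by simp

lemma block_replace_block:
  assumes "length B = 5" "5 * k + 5 \<le> length xs"
  shows "block (replace_block xs k B) j = (if j = k then B else block xs j)"
proof -
  have "block (replace_block xs k B) j ! i = block xs j ! i"
    if "j \<noteq> k" "i < length (block xs j)" for i
  proof -
    have "5 * j + 5 \<le> 5 * k \<or> 5 * k + 5 \<le> 5 * j"
      using that(1) by linarith
    then show ?thesis
      using that(2) assms unfolding block_def replace_block_def by (auto simp: nth_append)
  qed
  moreover have "length (block (replace_block xs k B) j) = length (block xs j)"
    using length_replace_block[OF assms] unfolding block_def by (metis length_drop length_take)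
  ultimately show ?thesis
    using assms unfolding block_def replace_block_def by (auto intro: nth_equalityI)
qed

lemma replace_block_replace_block:
  "length B = 5 \<Longrightarrow> 5 * k + 5 \<le> length xs \<Longrightarrow>
    replace_block (replace_block xs k B) k C = replace_block xs k C"
  unfolding replace_block_def by simp

lemma disjoint_blocks:
  assumes "distinct xs" "j \<noteq> k"
  shows "set (block xs j) \<inter> set (block xs k) = {}"
proof -
  have "set (block xs i) \<inter> set (block xs l) = {}" if "i < l" for i l
  proof -
    have "block xs i = drop (5 * i) (take (5 * i + 5) xs)"
      unfolding block_def by (simp add: take_drop add.commute)
    then have "set (block xs i) \<subseteq> set (take (5 * l) xs)"
      using that set_take_subset_set_take[of "5 * i + 5" "5 * l" xs] set_drop_subset by fastforce
    moreover have "set (block xs l) \<subseteq> set (drop (5 * l) xs)"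
      unfolding block_def by (rule set_take_subset)
    ultimately show ?thesis
      using set_take_disj_set_drop_if_distinct[OF assms(1), of "5 * l" "5 * l"] by blast
  qed
  then show ?thesis
    using assms(2) by (metis inf_commute nat_neq_iff)
qed

fun favourite_to_slot3 :: "nat rel \<Rightarrow> nat list \<Rightarrow> nat list" where
  "favourite_to_slot3 P [x0, x1, x2, x3, x4] =
     (if (x1, x2) \<in> P \<and> (x1, x3) \<in> P then [x0, x3, x2, x1, x4]
      else if (x2, x1) \<in> P \<and> (x2, x3) \<in> P then [x0, x1, x3, x2, x4]
      else [x0, x1, x2, x3, x4])"
| "favourite_to_slot3 P B = B"

(* The path edges of a block together with the three wins required by switchable. *)
fun block_edges :: "'a list \<Rightarrow> 'a rel" where
  "block_edges [y0, y1, y2, y3, y4] =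
     set [(y0, y1), (y1, y2), (y2, y3), (y3, y4), (y0, y3), (y3, y1), (y2, y4)]"
| "block_edges B = {}"

fun favourite_to_slot3_preimages :: "'a list \<Rightarrow> 'a list set" where
  "favourite_to_slot3_preimages [y0, y1, y2, y3, y4] =
     set [[y0, y1, y2, y3, y4], [y0, y3, y2, y1, y4], [y0, y1, y3, y2, y4]]"
| "favourite_to_slot3_preimages B = {}"

lemma card_block_edges: "card (block_edges B) \<le> 7"
proof (cases B rule: block_edges.cases)
  case (1 y0 y1 y2 y3 y4)
  show ?thesis
    unfolding 1 block_edges.simps(1) by (rule order_trans[OF card_length]) simp
qed simp_all

lemma card_favourite_to_slot3_preimages: "card (favourite_to_slot3_preimages B) \<le> 3"
proof (cases B rule: favourite_to_slot3_preimages.cases)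
  case (1 y0 y1 y2 y3 y4)
  show ?thesis
    unfolding 1 favourite_to_slot3_preimages.simps(1) by (rule order_trans[OF card_length]) simp
qed simp_all

lemma length_favourite_to_slot3: "length (favourite_to_slot3 P B) = length B"
  by (cases "(P, B)" rule: favourite_to_slot3.cases) auto

lemma set_favourite_to_slot3: "set (favourite_to_slot3 P B) = set B"
  by (cases "(P, B)" rule: favourite_to_slot3.cases) auto

lemma distinct_favourite_to_slot3: "distinct (favourite_to_slot3 P B) \<longleftrightarrow> distinct B"
  by (cases "(P, B)" rule: favourite_to_slot3.cases) auto

lemma favourite_to_slot3_preimage:
  "length B = 5 \<Longrightarrow> B \<in> favourite_to_slot3_preimages (favourite_to_slot3 P B)"
  by (auto simp: length_eq_5_conv)

lemma block_edges_subset: "block_edges B \<subseteq> set B \<times> set B"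
  by (cases B rule: block_edges.cases) auto

lemma block_edges_asym: "distinct B \<Longrightarrow> (x, y) \<in> block_edges B \<Longrightarrow> (y, x) \<notin> block_edges B"
  by (cases B rule: block_edges.cases) auto

lemma successively_block_edges:
  "length B = 5 \<Longrightarrow> successively (\<lambda>x y. (x, y) \<in> block_edges B) B"
  by (auto simp: length_eq_5_conv)

lemma favourite_to_slot3_prefers:
  assumes "is_ranking n P" "length B = 5" "distinct B" "set B \<subseteq> alts n"
  shows "(favourite_to_slot3 P B ! 3, favourite_to_slot3 P B ! 1) \<in> P \<and>
    (favourite_to_slot3 P B ! 3, favourite_to_slot3 P B ! 2) \<in> P"
proof -
  obtain x0 x1 x2 x3 x4 where B: "B = [x0, x1, x2, x3, x4]"
    using assms(2) unfolding length_eq_5_conv by blast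
  have "(x3, x1) \<in> P \<and> (x3, x2) \<in> P"
    if "\<not> ((x1, x2) \<in> P \<and> (x1, x3) \<in> P)" "\<not> ((x2, x1) \<in> P \<and> (x2, x3) \<in> P)"
  proof -
    have "(x, y) \<in> P \<or> (y, x) \<in> P" if "x \<in> set B" "y \<in> set B" "x \<noteq> y" for x y
      using assms(1,4) that unfolding is_ranking_def total_rel_def by blast
    then have "(x1, x2) \<in> P \<or> (x2, x1) \<in> P" "(x1, x3) \<in> P \<or> (x3, x1) \<in> P"
      "(x2, x3) \<in> P \<or> (x3, x2) \<in> P"
      using assms(3) unfolding B by auto
    moreover have "(x2, x1) \<in> P \<Longrightarrow> (x1, x3) \<in> P \<Longrightarrow> (x2, x3) \<in> P"
      "(x1, x2) \<in> P \<Longrightarrow> (x2, x3) \<in> P \<Longrightarrow> (x1, x3) \<in> P"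
      using assms(1) unfolding is_ranking_def trans_def by blast+
    ultimately show ?thesis
      using that by argo
  qed
  then show ?thesis
    unfolding B by simp
qed


definition reorient :: "'a rel \<Rightarrow> 'a rel \<Rightarrow> 'a rel" where
  "reorient E W = W - E\<inverse> \<union> E"

lemma reorient_outside:
  "E \<subseteq> A \<times> A \<Longrightarrow> x \<notin> A \<or> y \<notin> A \<Longrightarrow> (x, y) \<in> reorient E W \<longleftrightarrow> (x, y) \<in> W"
  unfolding reorient_def by auto

lemma is_tournament_reorient:
  assumes "is_tournament n W" "E \<subseteq> alts n \<times> alts n" "\<And>x y. (x, y) \<in> E \<Longrightarrow> (y, x) \<notin> E"
  shows "is_tournament n (reorient E W)"
  using assms unfolding is_tournament_def total_rel_def reorient_def by blast

lemma successively_reorient_segment: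
  assumes path: "successively (\<lambda>x y. (x, y) \<in> W) (as @ B @ bs)"
    and distinct: "distinct (as @ B' @ bs)"
    and E: "E \<subseteq> set B' \<times> set B'" "successively (\<lambda>x y. (x, y) \<in> E) B'"
    and ends: "B \<noteq> []" "B' \<noteq> []" "hd B' = hd B" "last B' = last B"
  shows "successively (\<lambda>x y. (x, y) \<in> reorient E W) (as @ B' @ bs)"
proof -
  have outside: "(x, y) \<in> reorient E W"
    if "(x, y) \<in> W" "x \<in> set as \<union> set bs \<or> y \<in> set as \<union> set bs" for x y
    using that distinct reorient_outside[OF E(1), of x y W] by auto
  have "successively (\<lambda>x y. (x, y) \<in> reorient E W) as"
    using path by (auto simp: successively_append_iff intro: successively_mono outside)
  moreover have "successively (\<lambda>x y. (x, y) \<in> reorient E W) bs"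
    using path by (auto simp: successively_append_iff intro: successively_mono outside)
  moreover have "successively (\<lambda>x y. (x, y) \<in> reorient E W) B'"
    using E(2) by (rule successively_mono) (simp add: reorient_def)
  moreover have "(last as, hd B') \<in> reorient E W" if "as \<noteq> []"
    using path that ends by (intro outside) (auto simp: successively_append_iff)
  moreover have "(last B', hd bs) \<in> reorient E W" if "bs \<noteq> []"
    using path that ends by (intro outside) (auto simp: successively_append_iff)
  ultimately show ?thesis
    using ends(2) by (auto simp: successively_append_iff)
qed

lemma switchable_cong:
  "W \<inter> set B \<times> set B = W' \<inter> set B \<times> set B \<Longrightarrow> switchable P W B \<longleftrightarrow> switchable P W' B"
  unfolding switchable_def by auto

lemma switchable_favourite_to_slot3:
  assumes "is_ranking n P" "length B = 5" "distinct B" "set B \<subseteq> alts n"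
    and "block_edges (favourite_to_slot3 P B) \<subseteq> W"
  shows "switchable P W (favourite_to_slot3 P B)"
proof -
  have "length (favourite_to_slot3 P B) = 5"
    using assms(2) length_favourite_to_slot3 by simp
  then obtain y0 y1 y2 y3 y4 where B': "favourite_to_slot3 P B = [y0, y1, y2, y3, y4]"
    unfolding length_eq_5_conv by blast
  show ?thesis
    using favourite_to_slot3_prefers[OF assms(1-4)] assms(5) unfolding B' switchable_def by simp
qed

(* Block k becomes switchable and nothing outside it changes. A preimage is therefore fixed by
   k (the unique switchable block of the image), the original order of the block (one of
   three) and the original orientation of W on the pairs of block_edges. *)
definition make_switchable :: "nat rel \<Rightarrow> nat \<Rightarrow> nat list \<times> nat rel \<Rightarrow> nat list \<times> nat rel" where
  "make_switchable P k = (\<lambda>(xs, W). let B = favourite_to_slot3 P (block xs k) in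
     (replace_block xs k B, reorient (block_edges B) W))"

definition hamiltonian_paths :: "nat \<Rightarrow> (nat list \<times> nat rel) set" where
  "hamiltonian_paths n = {(xs, W). distinct xs \<and> set xs = alts n \<and> is_tournament n W \<and>
     successively (\<lambda>x y. (x, y) \<in> W) xs}"

lemma length_hamiltonian_path: "(xs, W) \<in> hamiltonian_paths n \<Longrightarrow> length xs = n"
  using distinct_card[of xs] by (auto simp: hamiltonian_paths_def alts_def)

context
  fixes n k :: nat and P :: "nat rel" and xs :: "nat list" and W :: "nat rel"
  assumes path: "(xs, W) \<in> hamiltonian_paths n" and k: "k < n div 5"
begin

lemma block_in_range: "5 * k + 5 \<le> length xs"
proof -
  have "5 * (k + 1) \<le> 5 * (n div 5)"
    using k by (intro mult_le_mono2) simp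
  then show ?thesis
    using length_hamiltonian_path[OF path] by simp
qed

lemma make_switchable_split:
  obtains as bs x0 x1 x2 x3 x4 where "xs = as @ [x0, x1, x2, x3, x4] @ bs"
    "block xs k = [x0, x1, x2, x3, x4]"
    "make_switchable P k (xs, W) = (as @ favourite_to_slot3 P [x0, x1, x2, x3, x4] @ bs,
       reorient (block_edges (favourite_to_slot3 P [x0, x1, x2, x3, x4])) W)"
proof -
  obtain x0 x1 x2 x3 x4 where B: "block xs k = [x0, x1, x2, x3, x4]"
    using length_block[OF block_in_range] unfolding length_eq_5_conv by blast
  show thesis
    using that[of "take (5 * k) xs" x0 x1 x2 x3 x4 "drop (5 * k + 5) xs"] B
      replace_block_block[of xs k]
    unfolding make_switchable_def replace_block_def by (simp add: Let_def)
qed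

lemma make_switchable_in_hamiltonian_paths: "make_switchable P k (xs, W) \<in> hamiltonian_paths n"
proof -
  obtain as bs x0 x1 x2 x3 x4 where xs: "xs = as @ [x0, x1, x2, x3, x4] @ bs"
    and "block xs k = [x0, x1, x2, x3, x4]"
    and sw: "make_switchable P k (xs, W) = (as @ favourite_to_slot3 P [x0, x1, x2, x3, x4] @ bs,
       reorient (block_edges (favourite_to_slot3 P [x0, x1, x2, x3, x4])) W)"
    by (rule make_switchable_split)
  let ?B' = "favourite_to_slot3 P [x0, x1, x2, x3, x4]"
  have ys: "distinct (as @ ?B' @ bs)" "set (as @ ?B' @ bs) = alts n"
    using path unfolding hamiltonian_paths_def xs
    by (auto simp: set_favourite_to_slot3 distinct_favourite_to_slot3)
  have "is_tournament n (reorient (block_edges ?B') W)"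
  proof (rule is_tournament_reorient)
    show "is_tournament n W"
      using path unfolding hamiltonian_paths_def by simp
    show "block_edges ?B' \<subseteq> alts n \<times> alts n"
      using ys(2) block_edges_subset[of ?B'] by auto
    show "(y, x) \<notin> block_edges ?B'" if "(x, y) \<in> block_edges ?B'" for x y
      using ys(1) that block_edges_asym[of ?B'] by simp
  qed
  moreover have "successively (\<lambda>x y. (x, y) \<in> reorient (block_edges ?B') W) (as @ ?B' @ bs)"
    using path ys(1) block_edges_subset successively_block_edges[of ?B']
    unfolding hamiltonian_paths_def xs
    by (intro successively_reorient_segment[where B = "[x0, x1, x2, x3, x4]"]) auto
  ultimately show ?thesis
    using ys unfolding sw hamiltonian_paths_def by simp
qed

lemma switchable_make_switchable_iff:
  assumes P: "is_ranking n P" and "j < n div 5"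
  shows "switchable P (snd (make_switchable P k (xs, W)))
      (block (fst (make_switchable P k (xs, W))) j) \<longleftrightarrow>
    j = k \<or> switchable P W (block xs j)"
proof -
  let ?B' = "favourite_to_slot3 P (block xs k)"
  have B: "length (block xs k) = 5" "distinct (block xs k)" "set (block xs k) \<subseteq> alts n"
    using length_block[OF block_in_range] path unfolding hamiltonian_paths_def block_def
    by (auto dest: in_set_takeD in_set_dropD)
  have sw: "make_switchable P k (xs, W) = (replace_block xs k ?B', reorient (block_edges ?B') W)"
    unfolding make_switchable_def Let_def by simp
  show ?thesis
  proof (cases "j = k")
    case True
    have "switchable P (reorient (block_edges ?B') W) ?B'"
      using B by (intro switchable_favourite_to_slot3[OF P]) (auto simp: reorient_def)
    then show ?thesis
      using True block_replace_block[OF _ block_in_range] B(1) length_favourite_to_slot3 sw by simp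
  next
    case False
    have "set (block xs j) \<inter> set ?B' = {}"
      using disjoint_blocks[OF _ False] path
      unfolding hamiltonian_paths_def set_favourite_to_slot3 by auto
    then have "(x, y) \<in> reorient (block_edges ?B') W \<longleftrightarrow> (x, y) \<in> W"
      if "x \<in> set (block xs j)" for x y
      using that reorient_outside[OF block_edges_subset[of ?B'], of x y W] by blast
    then have "reorient (block_edges ?B') W \<inter> set (block xs j) \<times> set (block xs j) =
        W \<inter> set (block xs j) \<times> set (block xs j)"
      by auto
    moreover have "block (replace_block xs k ?B') j = block xs j"
      using False block_replace_block[OF _ block_in_range] B(1) length_favourite_to_slot3 by simp
    ultimately show ?thesis
      using False sw switchable_cong[of "reorient (block_edges ?B') W" "block xs j" W P] by simp
  qed
qed

lemma make_switchable_fibre: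
  assumes "make_switchable P k (xs, W) = (ys, W')"
  defines "E \<equiv> block_edges (block ys k) \<union> (block_edges (block ys k))\<inverse>"
  shows "(xs, W) \<in> (\<lambda>(C, S). (replace_block ys k C, W' - E \<union> S)) `
    (favourite_to_slot3_preimages (block ys k) \<times> Pow E)"
proof -
  let ?B' = "favourite_to_slot3 P (block xs k)"
  have len: "length (block xs k) = 5"
    by (rule length_block[OF block_in_range])
  have ys: "ys = replace_block xs k ?B'" and W': "W' = reorient (block_edges ?B') W"
    using assms(1) unfolding make_switchable_def Let_def by auto
  have "block ys k = ?B'"
    using block_replace_block[OF _ block_in_range] len length_favourite_to_slot3 ys by simp
  moreover have "xs = replace_block ys k (block xs k)"
    using ys len length_favourite_to_slot3 block_in_range by (simp add: replace_block_replace_block)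
  moreover have "W = W' - E \<union> W \<inter> E"
    unfolding W' E_def reorient_def \<open>block ys k = ?B'\<close> by blast
  ultimately show ?thesis
    using favourite_to_slot3_preimage[OF len, of P]
    by (intro image_eqI[where x = "(block xs k, W \<inter> E)"]) auto
qed

end

definition unswitchable_paths :: "nat rel \<Rightarrow> nat \<Rightarrow> (nat list \<times> nat rel) set" where
  "unswitchable_paths P n =
     {(xs, W) \<in> hamiltonian_paths n. \<forall>k < n div 5. \<not> switchable P W (block xs k)}"

lemma finite_hamiltonian_paths: "finite (hamiltonian_paths n)"
proof (rule finite_subset)
  show "hamiltonian_paths n \<subseteq> {xs. set xs \<subseteq> alts n \<and> length xs = n} \<times> Pow (alts n \<times> alts n)"
    using length_hamiltonian_path unfolding hamiltonian_paths_def is_tournament_def by auto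
  show "finite ({xs. set xs \<subseteq> alts n \<and> length xs = n} \<times> Pow (alts n \<times> alts n))"
    unfolding alts_def by (intro finite_cartesian_product finite_lists_length_eq) auto
qed

lemma card_le_mult_if_fibres_le:
  assumes "finite B" "f ` A \<subseteq> B" "\<And>b. b \<in> B \<Longrightarrow> card {a \<in> A. f a = b} \<le> c"
  shows "card A \<le> c * card B"
proof -
  have "A = (\<Union>b\<in>B. {a \<in> A. f a = b})"
    using assms(2) by blast
  then have "card A \<le> (\<Sum>b\<in>B. card {a \<in> A. f a = b})"
    using card_UN_le[OF assms(1), of "\<lambda>b. {a \<in> A. f a = b}"] by simp
  also have "\<dots> \<le> card B * c"
    using sum_bounded_above[of B "\<lambda>b. card {a \<in> A. f a = b}" c] assms(3) by simp
  finally show ?thesis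
    by (simp add: mult.commute)
qed

lemma make_switchable_index_unique:
  assumes P: "is_ranking n P"
    and "(xs, W) \<in> unswitchable_paths P n" "k < n div 5"
    and "(xs', W') \<in> unswitchable_paths P n" "k' < n div 5"
    and "make_switchable P k (xs, W) = make_switchable P k' (xs', W')"
  shows "k = k'"
proof -
  have paths: "(xs, W) \<in> hamiltonian_paths n" "(xs', W') \<in> hamiltonian_paths n"
    using assms(2,4) unfolding unswitchable_paths_def by auto
  have "switchable P (snd (make_switchable P k (xs, W)))
      (block (fst (make_switchable P k (xs, W))) k)"
    using switchable_make_switchable_iff[OF paths(1) assms(3) P assms(3)] by simp
  then show ?thesis
    using switchable_make_switchable_iff[OF paths(2) assms(5) P assms(3)] assms(3,4,6)
    unfolding unswitchable_paths_def by auto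
qed

lemma card_fibre_candidates:
  fixes B :: "'a list"
  defines "E \<equiv> block_edges B \<union> (block_edges B)\<inverse>"
  shows "finite (favourite_to_slot3_preimages B \<times> Pow E)"
    and "card (favourite_to_slot3_preimages B \<times> Pow E) \<le> 3 * 2 ^ 14"
proof -
  have "finite E"
    unfolding E_def by (cases B rule: block_edges.cases) auto
  then show "finite (favourite_to_slot3_preimages B \<times> Pow E)"
    by (cases B rule: favourite_to_slot3_preimages.cases) auto
  have "card E \<le> 14"
    using card_Un_le[of "block_edges B" "(block_edges B)\<inverse>"] card_block_edges[of B]
    unfolding E_def card_inverse by linarith
  then have "card (Pow E) \<le> 2 ^ 14"
    using \<open>finite E\<close> power_increasing[of "card E" 14 "2 :: nat"] by (simp add: card_Pow)
  then show "card (favourite_to_slot3_preimages B \<times> Pow E) \<le> 3 * 2 ^ 14"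
    unfolding card_cartesian_product using card_favourite_to_slot3_preimages
    by (intro mult_le_mono) auto
qed

lemma card_make_switchable_fibre:
  assumes P: "is_ranking n P"
  shows "card {a \<in> unswitchable_paths P n \<times> {..<n div 5}. (\<lambda>(p, k). make_switchable P k p) a = q}
    \<le> 3 * 2 ^ 14" (is "card ?F \<le> _")
proof (cases "?F = {}")
  case False
  obtain ys W' where q: "q = (ys, W')"
    by fastforce
  from False obtain xs0 W0 k0 where
    a0: "(xs0, W0) \<in> unswitchable_paths P n" "k0 < n div 5" "make_switchable P k0 (xs0, W0) = q"
    by auto
  define E where "E = block_edges (block ys k0) \<union> (block_edges (block ys k0))\<inverse>"
  have "?F \<subseteq> (\<lambda>(C, S). ((replace_block ys k0 C, W' - E \<union> S), k0)) `
      (favourite_to_slot3_preimages (block ys k0) \<times> Pow E)"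
  proof
    fix a assume "a \<in> ?F"
    then obtain xs W k where a: "a = ((xs, W), k)"
      "(xs, W) \<in> unswitchable_paths P n" "k < n div 5" "make_switchable P k (xs, W) = q"
      by auto
    then have "k = k0"
      using make_switchable_index_unique[OF P a(2,3) a0(1,2)] a0(3) by simp
    moreover have "(xs, W) \<in> hamiltonian_paths n"
      using a(2) unfolding unswitchable_paths_def by auto
    ultimately show "a \<in> (\<lambda>(C, S). ((replace_block ys k0 C, W' - E \<union> S), k0)) `
        (favourite_to_slot3_preimages (block ys k0) \<times> Pow E)"
      using make_switchable_fibre[OF _ a(3)] a(1,4) q unfolding E_def by fastforce
  qed
  then show ?thesis
    using card_fibre_candidates[of "block ys k0"] card_mono card_image_le order_trans
    unfolding E_def by (metis (no_types, lifting) finite_imageI)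
qed (metis card.empty zero_le)

lemma card_unswitchable_paths:
  assumes "is_ranking n P"
  shows "card (unswitchable_paths P n) * (n div 5) \<le> 3 * 2 ^ 14 * card (hamiltonian_paths n)"
proof -
  have "(\<lambda>(p, k). make_switchable P k p) ` (unswitchable_paths P n \<times> {..<n div 5})
      \<subseteq> hamiltonian_paths n"
    using make_switchable_in_hamiltonian_paths unfolding unswitchable_paths_def by auto
  then have "card (unswitchable_paths P n \<times> {..<n div 5}) \<le> 3 * 2 ^ 14 * card (hamiltonian_paths n)"
    using card_make_switchable_fibre[OF assms]
    by (rule card_le_mult_if_fibres_le[OF finite_hamiltonian_paths])
  then show ?thesis
    by (simp add: card_cartesian_product)
qed

lemma card_unimprovable_le_unswitchable:
  assumes P: "is_ranking n P"
  shows "card {(R, W). is_ranking n R \<and> is_tournament n W \<and> feasible n W R \<and> unimprovable n P W R}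
    \<le> card (unswitchable_paths P n)"
proof -
  have "{(R, W). is_ranking n R \<and> is_tournament n W \<and> feasible n W R \<and> unimprovable n P W R}
      \<subseteq> (\<lambda>(xs, W). (ranking_of xs, W)) ` unswitchable_paths P n"
  proof (rule subrelI)
    fix R W
    assume "(R, W) \<in>
      {(R, W). is_ranking n R \<and> is_tournament n W \<and> feasible n W R \<and> unimprovable n P W R}"
    then have R: "is_ranking n R" and W: "is_tournament n W"
      and "feasible n W R" "unimprovable n P W R"
      by auto
    obtain xs where xs: "distinct xs" "set xs = alts n" "R = ranking_of xs"
      using is_ranking_obtain_list[OF R] by blast
    then have path: "successively (\<lambda>x y. (x, y) \<in> W) xs"
      using feasible_ranking_of_iff[OF W xs(1,2)] \<open>feasible n W R\<close> by simp
    have "\<not> switchable P W (block xs k)" for k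
    proof -
      have "xs = take (5 * k) xs @ block xs k @ drop (5 * k + 5) xs"
        using replace_block_block[of xs k] unfolding replace_block_def by simp
      then show ?thesis
        using switchable_imp_not_unimprovable[OF P W xs(1,2) path] \<open>unimprovable n P W R\<close> xs(3)
        by blast
    qed
    then have "(xs, W) \<in> unswitchable_paths P n"
      using xs W path unfolding unswitchable_paths_def hamiltonian_paths_def by simp
    then show "(R, W) \<in> (\<lambda>(xs, W). (ranking_of xs, W)) ` unswitchable_paths P n"
      using xs(3) by force
  qed
  moreover have "finite (unswitchable_paths P n)"
    using finite_hamiltonian_paths by (rule rev_finite_subset) (auto simp: unswitchable_paths_def)
  ultimately show ?thesis
    by (meson card_image_le card_mono finite_imageI order_trans)
qed

lemma card_hamiltonian_paths_le_feasible:
  "card (hamiltonian_paths n) \<le> card {(R, W). is_ranking n R \<and> is_tournament n W \<and> feasible n W R}"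
proof (rule card_inj_on_le)
  show "inj_on (\<lambda>(xs, W). (ranking_of xs, W)) (hamiltonian_paths n)"
    using ranking_of_inject by (auto simp: inj_on_def hamiltonian_paths_def)
  show "(\<lambda>(xs, W). (ranking_of xs, W)) ` hamiltonian_paths n
      \<subseteq> {(R, W). is_ranking n R \<and> is_tournament n W \<and> feasible n W R}"
    using is_ranking_ranking_of feasible_ranking_of_iff by (auto simp: hamiltonian_paths_def)
  have "{(R, W). is_ranking n R \<and> is_tournament n W \<and> feasible n W R}
      \<subseteq> Pow (alts n \<times> alts n) \<times> Pow (alts n \<times> alts n)"
    unfolding is_ranking_def is_tournament_def by blast
  then show "finite {(R, W). is_ranking n R \<and> is_tournament n W \<and> feasible n W R}"
    by (rule finite_subset) (simp add: alts_def)
qed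

lemma card_unimprovable_mult_le:
  assumes "is_ranking n P"
  shows "card {(R, W). is_ranking n R \<and> is_tournament n W \<and> feasible n W R \<and> unimprovable n P W R}
      * (n div 5) \<le> 3 * 2 ^ 14 * card {(R, W). is_ranking n R \<and> is_tournament n W \<and> feasible n W R}"
proof -
  have "card {(R, W). is_ranking n R \<and> is_tournament n W \<and> feasible n W R \<and> unimprovable n P W R}
      * (n div 5) \<le> card (unswitchable_paths P n) * (n div 5)"
    using card_unimprovable_le_unswitchable[OF assms] by (rule mult_le_mono1)
  also have "\<dots> \<le> 3 * 2 ^ 14 * card (hamiltonian_paths n)"
    by (rule card_unswitchable_paths[OF assms])
  also have "\<dots> \<le> 3 * 2 ^ 14 * card {(R, W). is_ranking n R \<and> is_tournament n W \<and> feasible n W R}"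
    using card_hamiltonian_paths_le_feasible by (rule mult_le_mono2)
  finally show ?thesis .
qed

lemma ratio_tendsto_0_if_mult_le:
  fixes u f g :: "nat \<Rightarrow> nat"
  assumes bound: "\<And>n. u n * g n \<le> c * f n" and g: "filterlim g at_top sequentially"
  shows "(\<lambda>n. real (u n) / real (f n)) \<longlonglongrightarrow> 0"
proof -
  have lim: "(\<lambda>n. real c / real (g n)) \<longlonglongrightarrow> 0"
    by (intro tendsto_divide_0[OF tendsto_const] filterlim_at_top_imp_at_infinity
        filterlim_compose[OF filterlim_real_sequentially g])
  have "real (u n) / real (f n) \<le> real c / real (g n)" if "1 \<le> g n" for n
  proof (cases "f n = 0")
    case False
    have "real (u n * g n) \<le> real (c * f n)"
      using bound unfolding of_nat_le_iff .
    moreover have "0 < real (f n)" "0 < real (g n)"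
      using False that by auto
    ultimately show ?thesis
      by (simp add: field_simps)
  qed simp
  then have upper: "\<forall>\<^sub>F n in sequentially. real (u n) / real (f n) \<le> real c / real (g n)"
    using g unfolding filterlim_at_top by (blast intro: eventually_mono)
  have lower: "\<forall>\<^sub>F n in sequentially. 0 \<le> real (u n) / real (f n)"
    by simp
  show ?thesis
    by (rule tendsto_sandwich[OF lower upper tendsto_const lim])
qed

theorem proposition7:
  fixes P :: "nat \<Rightarrow> nat rel"
  assumes "\<And>n. is_ranking n (P n)"
  shows "(\<lambda>n. real (card {(R, W). is_ranking n R \<and> is_tournament n W \<and>
                                   feasible n W R \<and> unimprovable n (P n) W R})
             / real (card {(R, W). is_ranking n R \<and> is_tournament n W \<and> feasible n W R}))
         \<longlonglongrightarrow> 0"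
proof (rule ratio_tendsto_0_if_mult_le)
  show "card {(R, W). is_ranking n R \<and> is_tournament n W \<and> feasible n W R \<and>
      unimprovable n (P n) W R} * (n div 5) \<le>
    3 * 2 ^ 14 * card {(R, W). is_ranking n R \<and> is_tournament n W \<and> feasible n W R}" for n
    by (rule card_unimprovable_mult_le[OF assms])
  show "filterlim (\<lambda>n. n div 5) at_top sequentially"
    by (rule filterlim_at_top_div_const_nat) simp
qed

end
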